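(* The nine vectors $C_{b_0,b_0},C_{b_0,b_1},C_{b_0,b_2},C_{b_1,b_2},C_{b_2,b_2},C_{zb_2,b_1},C_{z^2b_2,b_0},C_{zb_1,b_0},C_{zb_1,b_1}$ are linearly independent over $\mathbb Q(q)$, and $N=\sum \mathbb Q(q)[z\otimes z,z^{-1}\otimes z^{-1},z\otimes1+1\otimes z]\,C$, the sum running over these nine vectors $C$. Moreover $N$ does not change if $v_0\otimes v_0$ is replaced by $v_2\otimes v_2$ in its definition, and $z^av_j\otimes z^av_j\in N$ for all $a\in\mathbb Z$ and $j\in\{0,2\}$.
   Context: Let $\mathfrak g=\widehat{\mathfrak{sl}}_2$, $I=\{0,1\}$, weight lattice $P=\mathbb Z\Lambda_0\oplus\mathbb Z\Lambda_1\oplus\mathbb Z\delta$, coroots $h_0,h_1$ with $\langle h_i,\Lambda_j\rangle=\delta_{ij}$, $\langle h_i,\delta\rangle=0$, central element $c=h_0+h_1$. $U_q(\mathfrak g)$ is the quantum affine algebra over $\mathbb Q(q)$ with generators $e_i,f_i$ ($i\in I$), $q^h$ ($h\in P^*$), $t_i=q^{h_i}$, and coproduct $\Delta(q^h)=q^h\otimes q^h$, $\Delta(e_i)=e_i\otimes1+t_i^{-1}\otimes e_i$, $\Delta(f_i)=f_i\otimes t_i+1\otimes f_i$. $[n]=(q^n-q^{-n})/(q-q^{-1})$. Let $J=\{0,1,2\}$. $V_{\mathrm{aff}}$ is the $\mathbb Q(q)$-space with basis $z^av_j$ ($a\in\mathbb Z$, $j\in J$), a $U_q(\mathfrak g)$-module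 via: $\mathrm{wt}(z^av_j)=2(1-j)(\Lambda_1-\Lambda_0)+a\delta$, $q^hz^av_j=q^{\langle h,\mathrm{wt}(z^av_j)\rangle}z^av_j$, $e_1z^av_j=[3-j]z^av_{j-1}$, $f_1z^av_j=[j+1]z^av_{j+1}$, $e_0z^av_j=[j+1]z^{a+1}v_{j+1}$, $f_0z^av_j=[3-j]z^{a-1}v_{j-1}$ (with $v_{-1}=v_3=0$). The operator $z^b$ sends $z^av_j\mapsto z^{a+b}v_j$. $N\subset V_{\mathrm{aff}}\otimes V_{\mathrm{aff}}$ is the smallest subspace containing $v_0\otimes v_0$ that is stable under the action of $U_q(\mathfrak g)$ (via $\Delta$) and under the operators $z\otimes z$, $z^{-1}\otimes z^{-1}$, $z\otimes1+1\otimes z$. The nine vectors are: $C_{b_0,b_0}=v_0\otimes v_0$, $C_{b_0,b_1}=v_0\otimes v_1+q^2v_1\otimes v_0$, $C_{b_0,b_2}=v_0\otimes v_2+q\,v_1\otimes v_1+q^4v_2\otimes v_0$, $C_{b_1,b_2}=v_1\otimes v_2+q^2v_2\otimes v_1$, $C_{b_2,b_2}=v_2\otimes v_2$, $C_{zb_2,b_1}=zv_2\otimes v_1+q^2v_1\otimes zv_2$, $C_{z^2b_2,b_0}=z^2v_2\otimes v_0+q\,zv_1\otimes zv_1+q^4v_0\otimes z^2v_2$, $C_{zb_1,b_0}=zv_1\otimes v_0+q^2v_0\otimes zv_1$, $C_{zb_1,b_1}=zv_1\otimes v_1+q^2v_1\otimes zv_1+q^2[2](v_0\otimes zv_2+zv_2\otimes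 v_0)$. *)

theory Defs
  imports "HOL-Computational_Algebra.Polynomial" "HOL-Computational_Algebra.Fraction_Field"
begin

section \<open>The base field Q(q)\<close>

type_synonym F = "rat poly fract"

definition qq :: F where "qq = Fract [:0, 1:] 1"

definition qint :: "int \<Rightarrow> F" where
  "qint n = (qq powi n - qq powi (-n)) / (qq - qq powi (-1))"

text \<open>A vector of V_aff is given by its coefficients w.r.t. the basis z^a v_j,
  indexed by (a, j); only j in J = {0,1,2} is meaningful. A vector of V_aff (x) V_aff
  is given by its coefficients w.r.t. the basis (z^a v_j) (x) (z^b v_k), indexed by (a,j,b,k).\<close>

type_synonym vec = "int \<times> int \<Rightarrow> F"
type_synonym tens = "int \<times> int \<times> int \<times> int \<Rightarrow> F"

definition Jset :: "int set" where "Jset = {0, 1, 2}"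

definition tadd :: "tens \<Rightarrow> tens \<Rightarrow> tens" where
  "tadd f g = (\<lambda>x. f x + g x)"

definition tsmult :: "F \<Rightarrow> tens \<Rightarrow> tens" where
  "tsmult c f = (\<lambda>x. c * f x)"

definition bt :: "int \<Rightarrow> int \<Rightarrow> int \<Rightarrow> int \<Rightarrow> tens" where
  "bt a j b k = (\<lambda>x. if x = (a, j, b, k) then 1 else 0)"

text \<open>e_1 z^a v_j = [3-j] z^a v_(j-1), with v_(-1) = 0.\<close>
definition opE1 :: "vec \<Rightarrow> vec" where
  "opE1 v = (\<lambda>(a, j). if j \<in> {0, 1} then qint (3 - (j + 1)) * v (a, j + 1) else 0)"

text \<open>f_1 z^a v_j = [j+1] z^a v_(j+1), with v_3 = 0.\<close>
definition opF1 :: "vec \<Rightarrow> vec" where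
  "opF1 v = (\<lambda>(a, j). if j \<in> {1, 2} then qint ((j - 1) + 1) * v (a, j - 1) else 0)"

text \<open>e_0 z^a v_j = [j+1] z^(a+1) v_(j+1), with v_3 = 0.\<close>
definition opE0 :: "vec \<Rightarrow> vec" where
  "opE0 v = (\<lambda>(a, j). if j \<in> {1, 2} then qint ((j - 1) + 1) * v (a - 1, j - 1) else 0)"

text \<open>f_0 z^a v_j = [3-j] z^(a-1) v_(j-1), with v_(-1) = 0.\<close>
definition opF0 :: "vec \<Rightarrow> vec" where
  "opF0 v = (\<lambda>(a, j). if j \<in> {0, 1} then qint (3 - (j + 1)) * v (a + 1, j + 1) else 0)"

text \<open>An element h of P^* = Hom(P, Z) is given by its values (c0, c1, d) on
  Lambda_0, Lambda_1, delta. The pairing of h with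
  wt(z^a v_j) = 2(1-j)(Lambda_1 - Lambda_0) + a delta.\<close>
definition pairing :: "int \<times> int \<times> int \<Rightarrow> int \<Rightarrow> int \<Rightarrow> int" where
  "pairing h a j = (case h of (c0, c1, d) \<Rightarrow> c0 * (- 2 * (1 - j)) + c1 * (2 * (1 - j)) + d * a)"

definition opQ :: "int \<times> int \<times> int \<Rightarrow> vec \<Rightarrow> vec" where
  "opQ h v = (\<lambda>(a, j). qq powi (pairing h a j) * v (a, j))"

text \<open>Coroots: h_0 = (1,0,0), h_1 = (0,1,0); t_i = q^(h_i).\<close>
definition coroot :: "nat \<Rightarrow> int \<times> int \<times> int" where
  "coroot i = (if i = 0 then (1, 0, 0) else (0, 1, 0))"

definition neg_h :: "int \<times> int \<times> int \<Rightarrow> int \<times> int \<times> int" where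
  "neg_h h = (case h of (c0, c1, d) \<Rightarrow> (- c0, - c1, - d))"

definition opE :: "nat \<Rightarrow> vec \<Rightarrow> vec" where
  "opE i = (if i = 0 then opE0 else opE1)"

definition opF :: "nat \<Rightarrow> vec \<Rightarrow> vec" where
  "opF i = (if i = 0 then opF0 else opF1)"

text \<open>The operator z^b: z^a v_j \<mapsto> z^(a+b) v_j.\<close>
definition opZ :: "int \<Rightarrow> vec \<Rightarrow> vec" where
  "opZ b v = (\<lambda>(a, j). v (a - b, j))"

definition lift1 :: "(vec \<Rightarrow> vec) \<Rightarrow> tens \<Rightarrow> tens" where
  "lift1 A f = (\<lambda>(a, j, b, k). A (\<lambda>(a', j'). f (a', j', b, k)) (a, j))"

definition lift2 :: "(vec \<Rightarrow> vec) \<Rightarrow> tens \<Rightarrow> tens" where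
  "lift2 A f = (\<lambda>(a, j, b, k). A (\<lambda>(b', k'). f (a, j, b', k')) (b, k))"

text \<open>Coproduct: Delta(q^h) = q^h (x) q^h, Delta(e_i) = e_i (x) 1 + t_i^-1 (x) e_i,
  Delta(f_i) = f_i (x) t_i + 1 (x) f_i.\<close>
definition DQ :: "int \<times> int \<times> int \<Rightarrow> tens \<Rightarrow> tens" where
  "DQ h f = lift1 (opQ h) (lift2 (opQ h) f)"

definition DE :: "nat \<Rightarrow> tens \<Rightarrow> tens" where
  "DE i f = tadd (lift1 (opE i) f) (lift1 (opQ (neg_h (coroot i))) (lift2 (opE i) f))"

definition DF :: "nat \<Rightarrow> tens \<Rightarrow> tens" where
  "DF i f = tadd (lift1 (opF i) (lift2 (opQ (coroot i)) f)) (lift2 (opF i) f)"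

definition ZZ :: "tens \<Rightarrow> tens" where "ZZ f = lift1 (opZ 1) (lift2 (opZ 1) f)"
definition ZZi :: "tens \<Rightarrow> tens" where "ZZi f = lift1 (opZ (-1)) (lift2 (opZ (-1)) f)"
definition ZS :: "tens \<Rightarrow> tens" where "ZS f = tadd (lift1 (opZ 1) f) (lift2 (opZ 1) f)"

inductive_set Ngen :: "tens \<Rightarrow> tens set" for g :: tens where
  gen: "g \<in> Ngen g"
| zero: "(\<lambda>x. 0) \<in> Ngen g"
| add: "f \<in> Ngen g \<Longrightarrow> h \<in> Ngen g \<Longrightarrow> tadd f h \<in> Ngen g"
| smult: "f \<in> Ngen g \<Longrightarrow> tsmult c f \<in> Ngen g"
| e: "f \<in> Ngen g \<Longrightarrow> i \<in> {0, 1} \<Longrightarrow> DE i f \<in> Ngen g"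
| f: "f \<in> Ngen g \<Longrightarrow> i \<in> {0, 1} \<Longrightarrow> DF i f \<in> Ngen g"
| qh: "f \<in> Ngen g \<Longrightarrow> DQ h f \<in> Ngen g"
| zz: "f \<in> Ngen g \<Longrightarrow> ZZ f \<in> Ngen g"
| zzi: "f \<in> Ngen g \<Longrightarrow> ZZi f \<in> Ngen g"
| zs: "f \<in> Ngen g \<Longrightarrow> ZS f \<in> Ngen g"

definition N :: "tens set" where "N = Ngen (bt 0 0 0 0)"

definition C_list :: "tens list" where
  "C_list = [
     bt 0 0 0 0,
     tadd (bt 0 0 0 1) (tsmult (qq^2) (bt 0 1 0 0)),
     tadd (bt 0 0 0 2) (tadd (tsmult qq (bt 0 1 0 1)) (tsmult (qq^4) (bt 0 2 0 0))),
     tadd (bt 0 1 0 2) (tsmult (qq^2) (bt 0 2 0 1)),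
     bt 0 2 0 2,
     tadd (bt 1 2 0 1) (tsmult (qq^2) (bt 0 1 1 2)),
     tadd (bt 2 2 0 0) (tadd (tsmult qq (bt 1 1 1 1)) (tsmult (qq^4) (bt 0 0 2 2))),
     tadd (bt 1 1 0 0) (tsmult (qq^2) (bt 0 0 1 1)),
     tadd (bt 1 1 0 1) (tadd (tsmult (qq^2) (bt 0 1 1 1))
        (tsmult (qq^2 * qint 2) (tadd (bt 0 0 1 2) (bt 1 2 0 0))))]"

definition lin_indep :: "tens list \<Rightarrow> bool" where
  "lin_indep Cs \<longleftrightarrow> (\<forall>c :: nat \<Rightarrow> F.
     (\<lambda>x. \<Sum>i<length Cs. c i * (Cs ! i) x) = (\<lambda>x. 0) \<longrightarrow> (\<forall>i<length Cs. c i = 0))"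

text \<open>The sum over C in Cs of Q(q)[z(x)z, z^-1(x)z^-1, z(x)1+1(x)z] C: finite
  Q(q)-linear combinations of monomials Z^m Zi^n S^p applied to the C's.\<close>
definition poly_span :: "tens list \<Rightarrow> tens set" where
  "poly_span Cs = {v. \<exists>(c :: nat \<Rightarrow> nat \<times> nat \<times> nat \<Rightarrow> F) (D :: (nat \<times> nat \<times> nat) set).
     finite D \<and>
     v = (\<lambda>x. \<Sum>i<length Cs. \<Sum>(m, n, p)\<in>D.
            c i (m, n, p) * ((ZZ ^^ m) ((ZZi ^^ n) ((ZS ^^ p) (Cs ! i)))) x)}"

end

theory Submission
  imports Defs "HOL-Library.Function_Algebras"
begin

text \<open>Let S be the sum of the Q(q)[z(x)z, z^-1(x)z^-1, z(x)1+1(x)z]-spans of the nine vectors.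
  S lies in N because each of the nine vectors is reached from v_0 (x) v_0 by e_0, f_0, f_1 and
  z(x)z, up to nonzero q-integer factors. Conversely S contains v_0 (x) v_0 and is stable under
  all generators of N: the three z-operators permute the monomials spanning S; e_i and f_i commute
  with them and, by explicit computation, map each of the nine vectors into S; and q^h acts on
  each monomial by a scalar because all of them are weight vectors. Hence N = S. Applying e_1
  repeatedly to v_2 (x) v_2 = C_b2b2 returns to C_b0b0 = v_0 (x) v_0, so both vectors generate the
  same N, and z(x)z and its inverse move v_j (x) v_j to z^a v_j (x) z^a v_j. Linear independence
  holds because each vector has a basis tensor at which the other eight vanish.\<close>

lemma qq_gt_1: "qq > 1"
proof -
  have "(1::rat poly) < [:0, 1:]"
    by (simp add: less_poly_def one_pCons pos_poly_pCons)
  then show ?thesis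
    unfolding qq_def using one_less_Fract_iff[of 1 "[:0,1:]"] by (simp add: One_fract_def)
qed

lemma qq_nonzero [simp]: "qq \<noteq> 0"
  using qq_gt_1 by simp

lemma qint_of_nat: "qint (int n) = (\<Sum>i<n. qq powi (int n - 1 - 2 * int i))"
proof -
  have "qq - qq powi (-1) \<noteq> 0"
    using qq_gt_1 less_1_mult[of qq qq] by (auto simp: power_int_minus field_simps)
  have "(qq - qq powi (-1)) * (\<Sum>i<n. qq powi (int n - 1 - 2 * int i))
      = (\<Sum>i<n. qq powi (int n - 2 * int i) - qq powi (int n - 2 * int (Suc i)))"
    unfolding sum_distrib_left
  proof (intro sum.cong refl)
    fix i
    have "qq powi (e - 1) * qq powi d = qq powi (e - 1 + d)" for e d
      by (simp add: power_int_add)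
    from this[of "int n - 2 * int i" 1] this[of "int n - 2 * int i" "-1"]
    show "(qq - qq powi (-1)) * qq powi (int n - 1 - 2 * int i)
      = qq powi (int n - 2 * int i) - qq powi (int n - 2 * int (Suc i))"
      by (simp add: algebra_simps)
  qed
  also have "\<dots> = qq powi int n - qq powi (- int n)"
    using sum_lessThan_telescope'[of "\<lambda>i. qq powi (int n - 2 * int i)" n] by simp
  finally show ?thesis
    unfolding qint_def using \<open>qq - qq powi (-1) \<noteq> 0\<close> by (simp add: field_simps)
qed

lemma qint_nonzero:
  assumes "n > 0"
  shows "qint n \<noteq> 0"
proof -
  have "qint (int (nat n)) > 0"
    unfolding qint_of_nat using assms qq_gt_1 by (intro sum_pos) (auto simp: lessThan_empty_iff)
  then show ?thesis using assms by simp
qed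

lemma qint_1_to_4:
  "qint 1 = 1" "qint 2 = qq + inverse qq" "qint 3 = qq^2 + 1 + inverse (qq^2)"
  "qint 4 = qq^3 + qq + inverse qq + inverse (qq^3)"
  using qint_of_nat[of 1] qint_of_nat[of 2] qint_of_nat[of 3] qint_of_nat[of 4]
  by (simp_all add: numeral_eq_Suc power_int_minus)

definition fscale :: "'a::comm_ring_1 \<Rightarrow> ('b \<Rightarrow> 'a) \<Rightarrow> 'b \<Rightarrow> 'a" where
  "fscale c f = (\<lambda>x. c * f x)"

interpretation fun_module: module "fscale :: 'a::comm_ring_1 \<Rightarrow> ('b \<Rightarrow> 'a) \<Rightarrow> 'b \<Rightarrow> 'a"
  by unfold_locales (auto simp: fscale_def fun_eq_iff algebra_simps)

lemma tadd_eq_plus: "tadd f g = f + g"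
  by (simp add: tadd_def plus_fun_def)

lemma tsmult_eq_fscale: "tsmult = fscale"
  by (simp add: tsmult_def fscale_def fun_eq_iff)

lemma module_hom_fscaleI:
  assumes "\<And>f g. T (f + g) = T f + T g" "\<And>c f. T (fscale c f) = fscale c (T f)"
  shows "module_hom fscale fscale T"
  using assms by (simp add: module_hom_iff fun_module.module_axioms)

lemma module_hom_lift1:
  assumes "module_hom fscale fscale A"
  shows "module_hom fscale fscale (lift1 A)"
proof (rule module_hom_fscaleI)
  have A: "A (u + v) = A u + A v" "A (fscale c u) = fscale c (A u)" for u v c
    using assms by (simp_all add: module_hom_iff)
  show "lift1 A (f + g) = lift1 A f + lift1 A g" for f g
    using A(1)[of "\<lambda>(a', j'). f (a', j', _, _)" "\<lambda>(a', j'). g (a', j', _, _)"]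
    by (auto simp: lift1_def fun_eq_iff plus_fun_def split_def)
  show "lift1 A (fscale c f) = fscale c (lift1 A f)" for c f
    using A(2)[of c "\<lambda>(a', j'). f (a', j', _, _)"]
    by (auto simp: lift1_def fun_eq_iff fscale_def split_def)
qed

lemma module_hom_lift2:
  assumes "module_hom fscale fscale A"
  shows "module_hom fscale fscale (lift2 A)"
proof (rule module_hom_fscaleI)
  have A: "A (u + v) = A u + A v" "A (fscale c u) = fscale c (A u)" for u v c
    using assms by (simp_all add: module_hom_iff)
  show "lift2 A (f + g) = lift2 A f + lift2 A g" for f g
    using A(1)[of "\<lambda>(b', k'). f (_, _, b', k')" "\<lambda>(b', k'). g (_, _, b', k')"]
    by (auto simp: lift2_def fun_eq_iff plus_fun_def split_def)
  show "lift2 A (fscale c f) = fscale c (lift2 A f)" for c f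
    using A(2)[of c "\<lambda>(b', k'). f (_, _, b', k')"]
    by (auto simp: lift2_def fun_eq_iff fscale_def split_def)
qed

lemma module_hom_factor_ops:
  "module_hom fscale fscale (opE i)" "module_hom fscale fscale (opF i)"
  "module_hom fscale fscale (opQ h)" "module_hom fscale fscale (opZ b)"
  by (auto intro!: module_hom_fscaleI
      simp: opE_def opE0_def opE1_def opF_def opF0_def opF1_def opQ_def opZ_def fscale_def
      fun_eq_iff algebra_simps)

lemma module_hom_tensor_ops:
  "module_hom fscale fscale (DE i)" "module_hom fscale fscale (DF i)"
  "module_hom fscale fscale (DQ h)" "module_hom fscale fscale ZZ"
  "module_hom fscale fscale ZZi" "module_hom fscale fscale ZS"
  by (auto intro!: module_hom_fscaleI simp: DE_def DF_def DQ_def ZZ_def ZZi_def ZS_def tadd_eq_plus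
      fun_module.scale_right_distrib
      module_hom_factor_ops[THEN module_hom_lift1, THEN module_hom.add]
      module_hom_factor_ops[THEN module_hom_lift1, THEN module_hom.scale]
      module_hom_factor_ops[THEN module_hom_lift2, THEN module_hom.add]
      module_hom_factor_ops[THEN module_hom_lift2, THEN module_hom.scale])

lemma sum_fun_apply: "(\<Sum>a\<in>A. f a) x = (\<Sum>a\<in>A. f a x)"
  by (induction A rule: infinite_finite_induct) auto

section \<open>Polynomials in the operators z (x) z, z^-1 (x) z^-1 and z (x) 1 + 1 (x) z\<close>

lemma z_ops_apply:
  "ZZ f = (\<lambda>(a, j, b, k). f (a - 1, j, b - 1, k))"
  "ZZi f = (\<lambda>(a, j, b, k). f (a + 1, j, b + 1, k))"
  "ZS f = (\<lambda>(a, j, b, k). f (a - 1, j, b, k) + f (a, j, b - 1, k))"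
  unfolding ZZ_def ZZi_def ZS_def tadd_def lift1_def lift2_def opZ_def by (auto simp: fun_eq_iff)

lemma z_ops_commute:
  "ZZ (ZZi f) = f" "ZZi (ZZ f) = f" "ZZ (ZS f) = ZS (ZZ f)" "ZZi (ZS f) = ZS (ZZi f)"
  by (simp_all add: z_ops_apply fun_eq_iff)

lemma generators_commute_z_ops:
  "DE i (ZZ f) = ZZ (DE i f)" "DE i (ZZi f) = ZZi (DE i f)" "DE i (ZS f) = ZS (DE i f)"
  "DF i (ZZ f) = ZZ (DF i f)" "DF i (ZZi f) = ZZi (DF i f)" "DF i (ZS f) = ZS (DF i f)"
  unfolding z_ops_apply DE_def DF_def tadd_def lift1_def lift2_def opE_def opE0_def opE1_def
    opF_def opF0_def opF1_def opQ_def pairing_def neg_h_def coroot_def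
  by (auto simp: fun_eq_iff algebra_simps)

lemma funpow_commute_op:
  assumes "\<And>f. T (Z f) = Z (T f)"
  shows "T ((Z ^^ n) f) = (Z ^^ n) (T f)"
  by (induction n) (simp_all add: assms)

definition z_monomial :: "nat \<times> nat \<times> nat \<Rightarrow> tens \<Rightarrow> tens" where
  "z_monomial t f = (case t of (m, n, p) \<Rightarrow> (ZZ ^^ m) ((ZZi ^^ n) ((ZS ^^ p) f)))"

definition z_monomials :: "tens set \<Rightarrow> tens set" where
  "z_monomials G = {z_monomial t C | t C. C \<in> G}"

abbreviation z_span :: "tens set \<Rightarrow> tens set" where
  "z_span G \<equiv> fun_module.span (z_monomials G)"

lemma z_monomialsI: "C \<in> G \<Longrightarrow> z_monomial t C \<in> z_monomials G"
  unfolding z_monomials_def by blast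

lemma z_monomial_induct:
  assumes "P f" "\<And>g. P g \<Longrightarrow> P (ZZ g)" "\<And>g. P g \<Longrightarrow> P (ZZi g)" "\<And>g. P g \<Longrightarrow> P (ZS g)"
  shows "P (z_monomial t f)"
proof -
  obtain m n p where t: "t = (m, n, p)" by (cases t)
  have "P ((ZS ^^ p) f)"
    by (induction p) (simp_all add: assms)
  then have "P ((ZZi ^^ n) ((ZS ^^ p) f))"
    by (induction n) (simp_all add: assms)
  then show ?thesis
    unfolding t z_monomial_def by (induction m) (simp_all add: assms)
qed

lemma z_monomial_commute:
  assumes "\<And>f. T (ZZ f) = ZZ (T f)" "\<And>f. T (ZZi f) = ZZi (T f)" "\<And>f. T (ZS f) = ZS (T f)"
  shows "T (z_monomial t f) = z_monomial t (T f)"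
  using funpow_commute_op[of T ZZ, OF assms(1)] funpow_commute_op[of T ZZi, OF assms(2)]
    funpow_commute_op[of T ZS, OF assms(3)]
  by (simp add: z_monomial_def split: prod.split)

lemma z_ops_z_monomial:
  "ZZ (z_monomial (m, n, p) f) = z_monomial (Suc m, n, p) f"
  "ZZi (z_monomial (m, n, p) f) = z_monomial (m, Suc n, p) f"
  "ZS (z_monomial (m, n, p) f) = z_monomial (m, n, Suc p) f"
  using funpow_commute_op[of ZZi ZZ] funpow_commute_op[of ZS ZZ] funpow_commute_op[of ZS ZZi]
  by (simp_all add: z_monomial_def z_ops_commute)

definition z_comb ::
  "tens list \<Rightarrow> (nat \<Rightarrow> nat \<times> nat \<times> nat \<Rightarrow> F) \<Rightarrow> (nat \<times> nat \<times> nat) set \<Rightarrow> tens" where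
  "z_comb Cs c D = (\<lambda>x. \<Sum>i<length Cs. \<Sum>t\<in>D. c i t * z_monomial t (Cs ! i) x)"

lemma poly_span_altdef: "poly_span Cs = {v. \<exists>c D. finite D \<and> v = z_comb Cs c D}"
  unfolding poly_span_def z_comb_def z_monomial_def by (simp add: case_prod_unfold)

lemma z_comb_extend:
  assumes "finite D'" "D \<subseteq> D'"
  shows "z_comb Cs c D = z_comb Cs (\<lambda>i t. if t \<in> D then c i t else 0) D'"
proof -
  have "(\<Sum>t\<in>D. c i t * z_monomial t (Cs ! i) x)
      = (\<Sum>t\<in>D'. (if t \<in> D then c i t else 0) * z_monomial t (Cs ! i) x)" for i x
    by (rule sum.mono_neutral_cong_left) (use assms in auto)
  then show ?thesis unfolding z_comb_def by simp
qed

lemma poly_span_subspace: "fun_module.subspace (poly_span Cs)"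
proof (unfold fun_module.subspace_def, intro conjI ballI allI)
  show "0 \<in> poly_span Cs"
    unfolding poly_span_altdef
    by (intro CollectI exI[of _ "\<lambda>_ _. 0"] exI[of _ "{}"]) (simp add: z_comb_def zero_fun_def)
  show "f + g \<in> poly_span Cs" if fg: "f \<in> poly_span Cs" "g \<in> poly_span Cs" for f g
  proof -
    obtain c D d E where fin: "finite D" "finite E" and "f = z_comb Cs c D" "g = z_comb Cs d E"
      using fg unfolding poly_span_altdef by blast
    then have "f = z_comb Cs (\<lambda>i t. if t \<in> D then c i t else 0) (D \<union> E)"
      and "g = z_comb Cs (\<lambda>i t. if t \<in> E then d i t else 0) (D \<union> E)"
      by (auto intro: z_comb_extend)
    then have "f + g
        = z_comb Cs (\<lambda>i t. (if t \<in> D then c i t else 0) + (if t \<in> E then d i t else 0)) (D \<union> E)"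
      by (simp add: z_comb_def plus_fun_def distrib_right sum.distrib)
    then show ?thesis
      unfolding poly_span_altdef using fin by blast
  qed
  show "fscale a f \<in> poly_span Cs" if f: "f \<in> poly_span Cs" for a f
  proof -
    obtain c D where "finite D" "f = z_comb Cs c D"
      using f unfolding poly_span_altdef by blast
    then have "fscale a f = z_comb Cs (\<lambda>i t. a * c i t) D"
      by (simp add: z_comb_def fscale_def sum_distrib_left mult.assoc)
    then show ?thesis
      unfolding poly_span_altdef using \<open>finite D\<close> by blast
  qed
qed

lemma poly_span_eq_span: "poly_span Cs = z_span (set Cs)"
proof
  show "poly_span Cs \<subseteq> z_span (set Cs)"
  proof
    fix v assume "v \<in> poly_span Cs"
    then obtain c D where "finite D" "v = z_comb Cs c D"
      unfolding poly_span_altdef by blast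
    then have "v = (\<Sum>i<length Cs. \<Sum>t\<in>D. fscale (c i t) (z_monomial t (Cs ! i)))"
      by (simp add: z_comb_def fun_eq_iff sum_fun_apply fscale_def)
    also have "\<dots> \<in> z_span (set Cs)"
      by (intro fun_module.span_sum fun_module.span_scale fun_module.span_base z_monomialsI nth_mem)
        simp
    finally show "v \<in> z_span (set Cs)" .
  qed
  have "z_monomials (set Cs) \<subseteq> poly_span Cs"
  proof
    fix v assume "v \<in> z_monomials (set Cs)"
    then obtain t i where v: "v = z_monomial t (Cs ! i)" and "i < length Cs"
      unfolding z_monomials_def by (auto simp: in_set_conv_nth)
    have "v = z_comb Cs (\<lambda>i' t'. if i' = i then 1 else 0) {t}"
      using \<open>i < length Cs\<close>
      by (simp add: v z_comb_def fun_eq_iff if_distrib[where f = "\<lambda>a. a * _ _"] cong: if_cong)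
    then show "v \<in> poly_span Cs"
      unfolding poly_span_altdef by blast
  qed
  then show "z_span (set Cs) \<subseteq> poly_span Cs"
    by (rule fun_module.span_minimal[OF _ poly_span_subspace])
qed

lemma span_closed_under_module_hom:
  assumes "module_hom fscale fscale T" "\<And>s. s \<in> S \<Longrightarrow> T s \<in> fun_module.span S"
    and "v \<in> fun_module.span S"
  shows "T v \<in> fun_module.span S"
proof -
  have "T v \<in> fun_module.span (T ` S)"
    using module_hom.span_image[OF assms(1)] assms(3) by blast
  also have "\<dots> \<subseteq> fun_module.span S"
    using assms(2) by (metis fun_module.span_mono fun_module.span_span image_subset_iff)
  finally show ?thesis .
qed

lemma z_monomials_z_ops:
  assumes "s \<in> z_monomials G"
  shows "ZZ s \<in> z_monomials G" "ZZi s \<in> z_monomials G" "ZS s \<in> z_monomials G"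
proof -
  obtain m n p C where "s = z_monomial (m, n, p) C" "C \<in> G"
    using assms unfolding z_monomials_def by auto
  then show "ZZ s \<in> z_monomials G" "ZZi s \<in> z_monomials G" "ZS s \<in> z_monomials G"
    by (simp_all add: z_ops_z_monomial z_monomialsI)
qed

lemma z_span_z_ops:
  assumes "v \<in> z_span G"
  shows "ZZ v \<in> z_span G" "ZZi v \<in> z_span G" "ZS v \<in> z_span G"
proof -
  have closed: "T v \<in> z_span G"
    if "module_hom fscale fscale T" "\<And>s. s \<in> z_monomials G \<Longrightarrow> T s \<in> z_monomials G" for T
    by (rule span_closed_under_module_hom[OF that(1) _ assms]) (rule fun_module.span_base, erule that(2))
  show "ZZ v \<in> z_span G"
    by (rule closed[OF module_hom_tensor_ops(4) z_monomials_z_ops(1)])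
  show "ZZi v \<in> z_span G"
    by (rule closed[OF module_hom_tensor_ops(5) z_monomials_z_ops(2)])
  show "ZS v \<in> z_span G"
    by (rule closed[OF module_hom_tensor_ops(6) z_monomials_z_ops(3)])
qed

lemma z_span_z_monomial:
  assumes "v \<in> z_span G"
  shows "z_monomial t v \<in> z_span G"
  using assms by (rule z_monomial_induct) (simp_all add: z_span_z_ops)

lemma z_span_base: "C \<in> G \<Longrightarrow> C \<in> z_span G"
  using z_monomialsI[of C G "(0, 0, 0)"] by (simp add: z_monomial_def fun_module.span_base)

lemma z_span_closed:
  assumes "module_hom fscale fscale T"
    and "\<And>f. T (ZZ f) = ZZ (T f)" "\<And>f. T (ZZi f) = ZZi (T f)" "\<And>f. T (ZS f) = ZS (T f)"
    and "\<And>C. C \<in> G \<Longrightarrow> T C \<in> z_span G"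
    and "v \<in> z_span G"
  shows "T v \<in> z_span G"
proof (rule span_closed_under_module_hom[OF assms(1) _ assms(6)])
  fix s assume "s \<in> z_monomials G"
  then obtain t C where "s = z_monomial t C" "C \<in> G"
    unfolding z_monomials_def by auto
  then show "T s \<in> z_span G"
    using z_monomial_commute[of T, OF assms(2-4)] z_span_z_monomial assms(5) by simp
qed

section \<open>Weight vectors\<close>

text \<open>The weight of z^a v_j (x) z^b v_k is 2(2 - (j + k))(Lambda_1 - Lambda_0) + (a + b) delta, so the
  weight vectors are the tensors supported on one set j + k = s, a + b = t.\<close>

definition is_weight_vector :: "int \<Rightarrow> int \<Rightarrow> tens \<Rightarrow> bool" where
  "is_weight_vector s t f \<longleftrightarrow> (\<forall>a j b k. f (a, j, b, k) \<noteq> 0 \<longrightarrow> j + k = s \<and> a + b = t)"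

lemma DQ_weight_vector:
  assumes "is_weight_vector s t f"
  shows "DQ h f = tsmult (qq powi pairing h t (s - 1)) f"
proof (rule ext, clarify)
  fix a j b k
  \<comment> \<open>z^a v_j (x) z^b v_k has the same weight as z^(a + b) v_(j + k - 1)\<close>
  have "pairing h t (s - 1) = pairing h a j + pairing h b k" if "f (a, j, b, k) \<noteq> 0"
  proof -
    have "s = j + k" "t = a + b"
      using assms that unfolding is_weight_vector_def by auto
    then show ?thesis
      unfolding pairing_def by (cases h) (simp add: algebra_simps)
  qed
  then show "DQ h f (a, j, b, k) = tsmult (qq powi pairing h t (s - 1)) f (a, j, b, k)"
    by (cases "f (a, j, b, k) = 0")
      (simp_all add: DQ_def lift1_def lift2_def opQ_def tsmult_def power_int_add)
qed

lemma is_weight_vector_z_monomial: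
  assumes "is_weight_vector s t f"
  shows "\<exists>t'. is_weight_vector s t' (z_monomial u f)"
proof -
  have ops: "is_weight_vector s (t + 2) (ZZ f)" "is_weight_vector s (t - 2) (ZZi f)"
    "is_weight_vector s (t + 1) (ZS f)" if "is_weight_vector s t f" for t f
  proof -
    have f: "j + k = s \<and> a + b = t" if "f (a, j, b, k) \<noteq> 0" for a j b k
      using \<open>is_weight_vector s t f\<close> that unfolding is_weight_vector_def by blast
    show "is_weight_vector s (t + 2) (ZZ f)" "is_weight_vector s (t - 2) (ZZi f)"
      unfolding is_weight_vector_def z_ops_apply by (auto dest: f)
    show "is_weight_vector s (t + 1) (ZS f)"
      unfolding is_weight_vector_def
    proof (intro allI impI)
      fix a j b k assume "ZS f (a, j, b, k) \<noteq> 0"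
      then have "f (a - 1, j, b, k) \<noteq> 0 \<or> f (a, j, b - 1, k) \<noteq> 0"
        by (auto simp: z_ops_apply)
      then show "j + k = s \<and> a + b = t + 1" by (auto dest: f)
    qed
  qed
  show ?thesis
    using assms
    by (intro z_monomial_induct[where P = "\<lambda>g. \<exists>t. is_weight_vector s t g"]) (use ops in blast)+
qed

lemma z_span_DQ:
  assumes "\<And>C. C \<in> G \<Longrightarrow> \<exists>s t. is_weight_vector s t C"
    and "v \<in> z_span G"
  shows "DQ h v \<in> z_span G"
proof (rule span_closed_under_module_hom[OF module_hom_tensor_ops(3) _ assms(2)])
  fix g assume "g \<in> z_monomials G"
  then obtain u C where g: "g = z_monomial u C" and "C \<in> G"
    unfolding z_monomials_def by auto
  then obtain s t where "is_weight_vector s t g"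
    using assms(1) is_weight_vector_z_monomial by blast
  then have "DQ h g = fscale (qq powi pairing h t (s - 1)) g"
    by (simp add: DQ_weight_vector tsmult_eq_fscale)
  then show "DQ h g \<in> z_span G"
    using \<open>g \<in> z_monomials G\<close> by (simp add: fun_module.span_base fun_module.span_scale)
qed

lemma Ngen_subspace: "fun_module.subspace (Ngen g)"
  unfolding fun_module.subspace_def
  using Ngen.zero Ngen.add Ngen.smult by (auto simp: tadd_eq_plus tsmult_eq_fscale zero_fun_def)

lemma Ngen_least:
  assumes "h \<in> Ngen g"
  shows "Ngen h \<subseteq> Ngen g"
proof
  fix f assume "f \<in> Ngen h"
  then show "f \<in> Ngen g"
    by induction (auto intro: Ngen.intros assms)
qed

lemma Ngen_generator_images:
  assumes "f \<in> Ngen g"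
  shows "DE 0 f \<in> Ngen g" "DE 1 f \<in> Ngen g" "DF 0 f \<in> Ngen g" "DF 1 f \<in> Ngen g"
  by (rule Ngen.e Ngen.f, fact assms, simp)+

lemma Ngen_cancel_scalar:
  assumes "tsmult c f \<in> Ngen g" "c \<noteq> 0"
  shows "f \<in> Ngen g"
proof -
  have "f = tsmult (inverse c) (tsmult c f)"
    using assms(2) by (simp add: tsmult_def fun_eq_iff)
  also have "\<dots> \<in> Ngen g"
    by (rule Ngen.smult[OF assms(1)])
  finally show ?thesis .
qed

lemma Ngen_z_monomial: "f \<in> Ngen g \<Longrightarrow> z_monomial t f \<in> Ngen g"
  by (rule z_monomial_induct) (simp_all add: Ngen.zz Ngen.zzi Ngen.zs)

lemma z_span_subset_Ngen:
  assumes "G \<subseteq> Ngen g"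
  shows "z_span G \<subseteq> Ngen g"
proof (rule fun_module.span_minimal[OF _ Ngen_subspace])
  show "z_monomials G \<subseteq> Ngen g"
    using assms Ngen_z_monomial unfolding z_monomials_def by blast
qed

lemma Ngen_subset_z_span:
  assumes "\<And>C. C \<in> G \<Longrightarrow> \<exists>s t. is_weight_vector s t C"
    and "\<And>i C. i \<in> {0, 1} \<Longrightarrow> C \<in> G \<Longrightarrow> DE i C \<in> z_span G"
    and "\<And>i C. i \<in> {0, 1} \<Longrightarrow> C \<in> G \<Longrightarrow> DF i C \<in> z_span G"
    and "g \<in> z_span G"
  shows "Ngen g \<subseteq> z_span G"
proof
  fix f assume "f \<in> Ngen g"
  then show "f \<in> z_span G"
  proof induction
    case gen
    then show ?case by (fact assms(4))
  next
    case zero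
    then show ?case using fun_module.span_zero by (simp add: zero_fun_def)
  next
    case (add f h)
    show ?case unfolding tadd_eq_plus using add.IH by (rule fun_module.span_add)
  next
    case (smult f c)
    show ?case unfolding tsmult_eq_fscale using smult.IH by (rule fun_module.span_scale)
  next
    case (e f i)
    show ?case
      by (rule z_span_closed[of "DE i", OF module_hom_tensor_ops(1)
            generators_commute_z_ops(1-3) assms(2)[OF e.hyps(2)] e.IH])
  next
    case (f f i)
    show ?case
      by (rule z_span_closed[of "DF i", OF module_hom_tensor_ops(2)
            generators_commute_z_ops(4-6) assms(3)[OF f.hyps(2)] f.IH])
  next
    case (qh f h)
    show ?case by (rule z_span_DQ[OF assms(1) qh.IH])
  next
    case (zz f)
    show ?case by (rule z_span_z_ops(1)[OF zz.IH])
  next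
    case (zzi f)
    show ?case by (rule z_span_z_ops(2)[OF zzi.IH])
  next
    case (zs f)
    show ?case by (rule z_span_z_ops(3)[OF zs.IH])
  qed
qed

section \<open>Finite linear combinations of basis vectors\<close>

text \<open>A list L of pairs (c, y) stands for the vector lincomb L = sum of c e_y. This
  turns identities between the explicit tensors below into finite computations.\<close>

definition lincomb :: "('b::monoid_add \<times> 'a) list \<Rightarrow> 'a \<Rightarrow> 'b" where
  "lincomb L = (\<lambda>x. \<Sum>(c, y)\<leftarrow>L. if y = x then c else 0)"

lemma lincomb_simps:
  "lincomb [] = 0"
  "lincomb ((c, y) # L) x = (if y = x then c else 0) + lincomb L x"
  "lincomb (L @ L') = lincomb L + lincomb L'"
  by (simp_all add: lincomb_def fun_eq_iff)

lemma lincomb_eqI: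
  assumes "\<forall>x \<in> set (map snd (L @ L')). lincomb L x = lincomb L' x"
  shows "lincomb L = lincomb L'"
proof
  have outside: "lincomb L x = 0" if "x \<notin> set (map snd L)" for L :: "('b \<times> 'a) list" and x
    using that by (induction L) (auto simp: lincomb_simps)
  show "lincomb L x = lincomb L' x" for x
    using assms outside[of x L] outside[of x L'] by (cases "x \<in> set (map snd (L @ L'))") auto
qed

lemma fscale_lincomb: "fscale c (lincomb L) = lincomb (map (\<lambda>(d, y). (c * d, y)) L)"
  by (induction L) (auto simp: lincomb_def fscale_def fun_eq_iff distrib_left)

definition acts_on_basis ::
  "(('a \<Rightarrow> F) \<Rightarrow> ('b \<Rightarrow> F)) \<Rightarrow> ('a \<Rightarrow> (F \<times> 'b) list) \<Rightarrow> bool" where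
  "acts_on_basis T LT \<longleftrightarrow> (\<forall>x. T (lincomb [(1, x)]) = lincomb (LT x))"

definition list_apply :: "('a \<Rightarrow> (F \<times> 'b) list) \<Rightarrow> (F \<times> 'a) list \<Rightarrow> (F \<times> 'b) list" where
  "list_apply LT L = concat (map (\<lambda>(c, x). map (\<lambda>(d, y). (c * d, y)) (LT x)) L)"

lemma module_hom_lincomb:
  assumes "module_hom fscale fscale T" "acts_on_basis T LT"
  shows "T (lincomb L) = lincomb (list_apply LT L)"
proof (induction L)
  case Nil
  then show ?case
    using module_hom.zero[OF assms(1)] by (simp add: lincomb_simps list_apply_def zero_fun_def)
next
  case (Cons p L)
  obtain c x where p: "p = (c, x)" by (cases p)
  have "lincomb (p # L) = fscale c (lincomb [(1, x)]) + lincomb L"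
    by (simp add: p fun_eq_iff lincomb_simps fscale_def)
  then have "T (lincomb (p # L)) = fscale c (lincomb (LT x)) + lincomb (list_apply LT L)"
    using assms Cons.IH by (simp add: module_hom.add module_hom.scale acts_on_basis_def)
  also have "\<dots> = lincomb (list_apply LT (p # L))"
    by (simp only: p list_apply_def fscale_lincomb lincomb_simps(3) list.map concat.simps prod.case)
  finally show ?case .
qed

lemma acts_on_basis_lift1:
  assumes "module_hom fscale fscale A" "acts_on_basis A LA"
  shows "acts_on_basis (lift1 A) (\<lambda>(a, j, b, k). map (\<lambda>(d, (a', j')). (d, (a', j', b, k))) (LA (a, j)))"
  unfolding acts_on_basis_def
proof (clarify, rule ext, clarify)
  fix a j b k a' j' b' k' :: int
  have slice: "(\<lambda>(a'', j''). lincomb [(1, (a, j, b, k))] (a'', j'', b', k'))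
      = (if (b, k) = (b', k') then lincomb [(1, (a, j))] else 0)"
    by (auto simp: lincomb_simps fun_eq_iff)
  have embed: "lincomb (map (\<lambda>(d, (a'', j'')). (d, (a'', j'', b, k))) M) (a', j', b', k')
      = (if (b, k) = (b', k') then lincomb M (a', j') else 0)" for M :: "(F \<times> int \<times> int) list"
    by (induction M) (auto simp: lincomb_simps)
  have "lift1 A (lincomb [(1, (a, j, b, k))]) (a', j', b', k')
      = A (if (b, k) = (b', k') then lincomb [(1, (a, j))] else 0) (a', j')"
    unfolding lift1_def prod.case slice ..
  also have "\<dots> = (if (b, k) = (b', k') then lincomb (LA (a, j)) (a', j') else 0)"
    using assms(2) module_hom.zero[OF assms(1)] by (simp add: acts_on_basis_def)
  also have "\<dots> = lincomb (map (\<lambda>(d, (a', j')). (d, (a', j', b, k))) (LA (a, j))) (a', j', b', k')"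
    by (rule embed[symmetric])
  finally show "lift1 A (lincomb [(1, (a, j, b, k))]) (a', j', b', k')
      = lincomb (map (\<lambda>(d, (a', j')). (d, (a', j', b, k))) (LA (a, j))) (a', j', b', k')" .
qed

lemma acts_on_basis_lift2:
  assumes "module_hom fscale fscale A" "acts_on_basis A LA"
  shows "acts_on_basis (lift2 A) (\<lambda>(a, j, b, k). map (\<lambda>(d, (b', k')). (d, (a, j, b', k'))) (LA (b, k)))"
  unfolding acts_on_basis_def
proof (clarify, rule ext, clarify)
  fix a j b k a' j' b' k' :: int
  have slice: "(\<lambda>(b'', k''). lincomb [(1, (a, j, b, k))] (a', j', b'', k''))
      = (if (a, j) = (a', j') then lincomb [(1, (b, k))] else 0)"
    by (auto simp: lincomb_simps fun_eq_iff)
  have embed: "lincomb (map (\<lambda>(d, (b'', k'')). (d, (a, j, b'', k''))) M) (a', j', b', k')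
      = (if (a, j) = (a', j') then lincomb M (b', k') else 0)" for M :: "(F \<times> int \<times> int) list"
    by (induction M) (auto simp: lincomb_simps)
  have "lift2 A (lincomb [(1, (a, j, b, k))]) (a', j', b', k')
      = A (if (a, j) = (a', j') then lincomb [(1, (b, k))] else 0) (b', k')"
    unfolding lift2_def prod.case slice ..
  also have "\<dots> = (if (a, j) = (a', j') then lincomb (LA (b, k)) (b', k') else 0)"
    using assms(2) module_hom.zero[OF assms(1)] by (simp add: acts_on_basis_def)
  also have "\<dots> = lincomb (map (\<lambda>(d, (b', k')). (d, (a, j, b', k'))) (LA (b, k))) (a', j', b', k')"
    by (rule embed[symmetric])
  finally show "lift2 A (lincomb [(1, (a, j, b, k))]) (a', j', b', k')
      = lincomb (map (\<lambda>(d, (b', k')). (d, (a, j, b', k'))) (LA (b, k))) (a', j', b', k')" .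
qed

definition e0_basis :: "int \<times> int \<Rightarrow> (F \<times> int \<times> int) list" where
  "e0_basis = (\<lambda>(a, j). if j \<in> {0, 1} then [(qint (j + 1), (a + 1, j + 1))] else [])"

definition e1_basis :: "int \<times> int \<Rightarrow> (F \<times> int \<times> int) list" where
  "e1_basis = (\<lambda>(a, j). if j \<in> {1, 2} then [(qint (3 - j), (a, j - 1))] else [])"

definition f0_basis :: "int \<times> int \<Rightarrow> (F \<times> int \<times> int) list" where
  "f0_basis = (\<lambda>(a, j). if j \<in> {1, 2} then [(qint (3 - j), (a - 1, j - 1))] else [])"

definition f1_basis :: "int \<times> int \<Rightarrow> (F \<times> int \<times> int) list" where
  "f1_basis = (\<lambda>(a, j). if j \<in> {0, 1} then [(qint (j + 1), (a, j + 1))] else [])"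

definition q_basis :: "int \<times> int \<times> int \<Rightarrow> int \<times> int \<Rightarrow> (F \<times> int \<times> int) list" where
  "q_basis h = (\<lambda>(a, j). [(qq powi pairing h a j, (a, j))])"

definition z_basis :: "int \<Rightarrow> int \<times> int \<Rightarrow> (F \<times> int \<times> int) list" where
  "z_basis b = (\<lambda>(a, j). [(1, (a + b, j))])"

lemma acts_on_basis_factor_ops:
  "acts_on_basis (opE 0) e0_basis" "acts_on_basis (opE 1) e1_basis"
  "acts_on_basis (opF 0) f0_basis" "acts_on_basis (opF 1) f1_basis"
  "acts_on_basis (opQ h) (q_basis h)" "acts_on_basis (opZ b) (z_basis b)"
  unfolding acts_on_basis_def opE_def opE0_def opE1_def opF_def opF0_def opF1_def opQ_def opZ_def
    e0_basis_def e1_basis_def f0_basis_def f1_basis_def q_basis_def z_basis_def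
  by (auto simp: lincomb_simps fun_eq_iff)

lemma lifts_lincomb:
  assumes "module_hom fscale fscale A" "acts_on_basis A LA"
  shows "lift1 A (lincomb L)
      = lincomb (list_apply (\<lambda>(a, j, b, k). map (\<lambda>(d, (a', j')). (d, (a', j', b, k))) (LA (a, j))) L)"
    and "lift2 A (lincomb L)
      = lincomb (list_apply (\<lambda>(a, j, b, k). map (\<lambda>(d, (b', k')). (d, (a, j, b', k'))) (LA (b, k))) L)"
  by (rule module_hom_lincomb[OF module_hom_lift1 acts_on_basis_lift1, OF assms(1) assms],
      rule module_hom_lincomb[OF module_hom_lift2 acts_on_basis_lift2, OF assms(1) assms])

lemma bt_lincomb: "bt a j b k = lincomb [(1, (a, j, b, k))]"
  by (simp add: bt_def lincomb_def fun_eq_iff)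

lemmas tensor_to_lincomb = DE_def DF_def ZZ_def ZZi_def ZS_def bt_lincomb tadd_eq_plus tsmult_eq_fscale
  fscale_lincomb lincomb_simps(1,3)[symmetric]
  lifts_lincomb[OF module_hom_factor_ops(1) acts_on_basis_factor_ops(1)]
  lifts_lincomb[OF module_hom_factor_ops(1) acts_on_basis_factor_ops(2)]
  lifts_lincomb[OF module_hom_factor_ops(2) acts_on_basis_factor_ops(3)]
  lifts_lincomb[OF module_hom_factor_ops(2) acts_on_basis_factor_ops(4)]
  lifts_lincomb[OF module_hom_factor_ops(3) acts_on_basis_factor_ops(5)]
  lifts_lincomb[OF module_hom_factor_ops(4) acts_on_basis_factor_ops(6)]

lemmas lincomb_evaluate = list_apply_def e0_basis_def e1_basis_def f0_basis_def f1_basis_def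
  q_basis_def z_basis_def lincomb_simps pairing_def neg_h_def coroot_def qint_1_to_4 power_int_minus

definition "C_b0b0 = bt 0 0 0 0"
definition "C_b0b1 = tadd (bt 0 0 0 1) (tsmult (qq^2) (bt 0 1 0 0))"
definition "C_b0b2 = tadd (bt 0 0 0 2) (tadd (tsmult qq (bt 0 1 0 1)) (tsmult (qq^4) (bt 0 2 0 0)))"
definition "C_b1b2 = tadd (bt 0 1 0 2) (tsmult (qq^2) (bt 0 2 0 1))"
definition "C_b2b2 = bt 0 2 0 2"
definition "C_zb2b1 = tadd (bt 1 2 0 1) (tsmult (qq^2) (bt 0 1 1 2))"
definition "C_z2b2b0 = tadd (bt 2 2 0 0) (tadd (tsmult qq (bt 1 1 1 1)) (tsmult (qq^4) (bt 0 0 2 2)))"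
definition "C_zb1b0 = tadd (bt 1 1 0 0) (tsmult (qq^2) (bt 0 0 1 1))"
definition "C_zb1b1 = tadd (bt 1 1 0 1) (tadd (tsmult (qq^2) (bt 0 1 1 1))
        (tsmult (qq^2 * qint 2) (tadd (bt 0 0 1 2) (bt 1 2 0 0))))"

lemmas C_defs = C_b0b0_def C_b0b1_def C_b0b2_def C_b1b2_def C_b2b2_def C_zb2b1_def C_z2b2b0_def
  C_zb1b0_def C_zb1b1_def

lemma C_list_eq: "C_list = [C_b0b0, C_b0b1, C_b0b2, C_b1b2, C_b2b2, C_zb2b1, C_z2b2b0, C_zb1b0, C_zb1b1]"
  by (simp add: C_list_def C_defs)

lemma DE0_on_C:
  "DE 0 C_b0b0 = C_zb1b0"
  "DE 0 C_b0b1 = C_zb1b1"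
  "DE 0 C_b0b2 = tadd (ZS C_b1b2) C_zb2b1"
  "DE 0 C_b1b2 = tsmult (qint 2) (ZS C_b2b2)"
  "DE 0 C_b2b2 = 0"
  "DE 0 C_zb2b1 = tsmult (qint 4) (ZZ C_b2b2)"
  "DE 0 C_z2b2b0 = tsmult (qint 3) (ZZ C_zb2b1)"
  "DE 0 C_zb1b0 = tsmult (qint 2) C_z2b2b0"
  "DE 0 C_zb1b1 = tadd (tsmult (qint 2) (ZZ C_b1b2)) (tsmult (qint 2) (ZS C_zb2b1))"
  unfolding C_defs tensor_to_lincomb
  by (rule lincomb_eqI, simp add: lincomb_evaluate field_simps, algebra?)+

lemma DE1_on_C:
  "DE 1 C_b0b0 = 0"
  "DE 1 C_b0b1 = tsmult (qint 4) C_b0b0"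
  "DE 1 C_b0b2 = tsmult (qint 3) C_b0b1"
  "DE 1 C_b1b2 = tsmult (qint 2) C_b0b2"
  "DE 1 C_b2b2 = C_b1b2"
  "DE 1 C_zb2b1 = C_zb1b1"
  "DE 1 C_z2b2b0 = tadd (ZZ C_b0b1) (ZS C_zb1b0)"
  "DE 1 C_zb1b0 = tsmult (qint 2) (ZS C_b0b0)"
  "DE 1 C_zb1b1 = tadd (tsmult (qint 2) (ZS C_b0b1)) (tsmult (qint 2) C_zb1b0)"
  unfolding C_defs tensor_to_lincomb
  by (rule lincomb_eqI, simp add: lincomb_evaluate field_simps, algebra?)+

lemma DF0_on_C:
  "DF 0 C_b0b0 = 0"
  "DF 0 C_b0b1 = tsmult (qint 2) (ZZi (ZS C_b0b0))"
  "DF 0 C_b0b2 = tadd (ZZi (ZS C_b0b1)) (ZZi C_zb1b0)"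
  "DF 0 C_b1b2 = ZZi C_zb1b1"
  "DF 0 C_b2b2 = ZZi C_zb2b1"
  "DF 0 C_zb2b1 = tsmult (qint 2) (ZZi C_z2b2b0)"
  "DF 0 C_z2b2b0 = tsmult (qint 3) C_zb1b0"
  "DF 0 C_zb1b0 = tsmult (qint 4) C_b0b0"
  "DF 0 C_zb1b1 = tadd (tsmult (qint 2) C_b0b1) (tsmult (qint 2) (ZZi (ZS C_zb1b0)))"
  unfolding C_defs tensor_to_lincomb
  by (rule lincomb_eqI, simp add: lincomb_evaluate field_simps, algebra?)+

lemma DF1_on_C:
  "DF 1 C_b0b0 = C_b0b1"
  "DF 1 C_b0b1 = tsmult (qint 2) C_b0b2"
  "DF 1 C_b0b2 = tsmult (qint 3) C_b1b2"
  "DF 1 C_b1b2 = tsmult (qint 4) C_b2b2"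
  "DF 1 C_b2b2 = 0"
  "DF 1 C_zb2b1 = tsmult (qint 2) (ZS C_b2b2)"
  "DF 1 C_z2b2b0 = tadd (ZZ C_b1b2) (ZS C_zb2b1)"
  "DF 1 C_zb1b0 = C_zb1b1"
  "DF 1 C_zb1b1 = tadd (tsmult (qint 2) (ZS C_b1b2)) (tsmult (qint 2) C_zb2b1)"
  unfolding C_defs tensor_to_lincomb
  by (rule lincomb_eqI, simp add: lincomb_evaluate field_simps, algebra?)+

lemma C_list_weight_vectors: "C \<in> set C_list \<Longrightarrow> \<exists>s t. is_weight_vector s t C"
proof -
  have "is_weight_vector 0 0 C_b0b0" "is_weight_vector 1 0 C_b0b1" "is_weight_vector 2 0 C_b0b2"
    "is_weight_vector 3 0 C_b1b2" "is_weight_vector 4 0 C_b2b2" "is_weight_vector 3 1 C_zb2b1"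
    "is_weight_vector 2 2 C_z2b2b0" "is_weight_vector 1 1 C_zb1b0" "is_weight_vector 2 1 C_zb1b1"
    unfolding is_weight_vector_def C_defs by (auto simp: bt_def tadd_def tsmult_def)
  then show "C \<in> set C_list \<Longrightarrow> \<exists>s t. is_weight_vector s t C"
    unfolding C_list_eq by auto
qed

lemma C_list_generators_closed:
  "\<forall>C \<in> set C_list. \<forall>i \<in> {0, 1}.
     DE i C \<in> z_span (set C_list) \<and> DF i C \<in> z_span (set C_list)"
proof -
  \<comment> \<open>S is kept opaque so that unfolding \<^const>\<open>C_list\<close> below leaves it intact\<close>
  define S where "S = z_span (set C_list)"
  have base: "C_b0b0 \<in> S" "C_b0b1 \<in> S" "C_b0b2 \<in> S" "C_b1b2 \<in> S" "C_b2b2 \<in> S" "C_zb2b1 \<in> S"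
    "C_z2b2b0 \<in> S" "C_zb1b0 \<in> S" "C_zb1b1 \<in> S"
    unfolding S_def by (simp_all add: z_span_base C_list_eq)
  note closure = fun_module.span_add[of _ "z_monomials (set C_list)", folded S_def]
    fun_module.span_scale[of _ "z_monomials (set C_list)", folded S_def]
    fun_module.span_zero[of "z_monomials (set C_list)", folded S_def]
    z_span_z_ops[of _ "set C_list", folded S_def]
    base
  have "\<forall>C \<in> set C_list. \<forall>i \<in> {0, 1}. DE i C \<in> S \<and> DF i C \<in> S"
    unfolding C_list_eq
    by (simp only: list.set ball_simps insert_iff empty_iff simp_thms
        DE0_on_C DE1_on_C DF0_on_C DF1_on_C tadd_eq_plus tsmult_eq_fscale)
      (intro conjI closure)
  then show ?thesis unfolding S_def .
qed

lemma C_list_subset_N: "set C_list \<subseteq> N"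
proof -
  note images = Ngen_generator_images[where g = "bt 0 0 0 0", folded N_def]
  note cancel = Ngen_cancel_scalar[where g = "bt 0 0 0 0", folded N_def]
  have b0b0: "C_b0b0 \<in> N" unfolding N_def C_b0b0_def by (rule Ngen.gen)
  have b0b1: "C_b0b1 \<in> N" using images(4)[OF b0b0] unfolding DF1_on_C .
  have b0b2: "C_b0b2 \<in> N"
    by (rule cancel[OF images(4)[OF b0b1, unfolded DF1_on_C]]) (simp add: qint_nonzero)
  have b1b2: "C_b1b2 \<in> N"
    by (rule cancel[OF images(4)[OF b0b2, unfolded DF1_on_C]]) (simp add: qint_nonzero)
  have b2b2: "C_b2b2 \<in> N"
    by (rule cancel[OF images(4)[OF b1b2, unfolded DF1_on_C]]) (simp add: qint_nonzero)
  have zb1b0: "C_zb1b0 \<in> N" using images(1)[OF b0b0] unfolding DE0_on_C .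
  have zb1b1: "C_zb1b1 \<in> N" using images(4)[OF zb1b0] unfolding DF1_on_C .
  have z2b2b0: "C_z2b2b0 \<in> N"
    by (rule cancel[OF images(1)[OF zb1b0, unfolded DE0_on_C]]) (simp add: qint_nonzero)
  have zb2b1: "C_zb2b1 \<in> N"
    using Ngen.zz[OF images(3)[OF b2b2, unfolded N_def]] by (simp add: DF0_on_C N_def z_ops_commute)
  show ?thesis
    unfolding C_list_eq using b0b0 b0b1 b0b2 b1b2 b2b2 zb2b1 z2b2b0 zb1b0 zb1b1 by simp
qed

lemma N_eq_span: "N = z_span (set C_list)"
proof
  show "N \<subseteq> z_span (set C_list)"
    unfolding N_def
  proof (rule Ngen_subset_z_span)
    show "bt 0 0 0 0 \<in> z_span (set C_list)"
      using z_span_base[of C_b0b0 "set C_list"] by (simp add: C_list_eq C_b0b0_def)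
  qed (use C_list_weight_vectors C_list_generators_closed in blast)+
  show "z_span (set C_list) \<subseteq> N"
    unfolding N_def by (rule z_span_subset_Ngen[OF C_list_subset_N[unfolded N_def]])
qed

lemma lin_indep_C_list: "lin_indep C_list"
  unfolding lin_indep_def
proof (intro allI impI)
  fix c :: "nat \<Rightarrow> F" and i
  assume combination: "(\<lambda>x. \<Sum>i<length C_list. c i * (C_list ! i) x) = (\<lambda>x. 0)"
    and "i < length C_list"
  have vanish: "c 0 * C_b0b0 x + c 1 * C_b0b1 x + c 2 * C_b0b2 x + c 3 * C_b1b2 x + c 4 * C_b2b2 x
      + c 5 * C_zb2b1 x + c 6 * C_z2b2b0 x + c 7 * C_zb1b0 x + c 8 * C_zb1b1 x = 0" for x
    using fun_cong[OF combination, of x] by (simp add: C_list_eq numeral_eq_Suc)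
  \<comment> \<open>evaluate at a basis tensor of each vector at which the other eight vanish\<close>
  have "c 0 = 0" "c 1 = 0" "c 2 = 0" "c 3 = 0" "c 4 = 0" "c 5 = 0" "c 6 = 0" "c 7 = 0" "c 8 = 0"
    using vanish[of "(0, 0, 0, 0)"] vanish[of "(0, 0, 0, 1)"] vanish[of "(0, 0, 0, 2)"]
      vanish[of "(0, 1, 0, 2)"] vanish[of "(0, 2, 0, 2)"] vanish[of "(1, 2, 0, 1)"]
      vanish[of "(2, 2, 0, 0)"] vanish[of "(1, 1, 0, 0)"] vanish[of "(1, 1, 0, 1)"]
    by (simp_all add: C_defs bt_def tadd_def tsmult_def)
  then show "c i = 0"
    using \<open>i < length C_list\<close> by (auto simp: C_list_eq less_Suc_eq numeral_eq_Suc)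
qed

lemma Ngen_b2b2_eq_Ngen_b0b0: "Ngen (bt 0 2 0 2) = Ngen (bt 0 0 0 0)"
proof
  show "Ngen (bt 0 2 0 2) \<subseteq> Ngen (bt 0 0 0 0)"
    using C_list_subset_N by (intro Ngen_least) (simp add: C_list_eq C_b2b2_def N_def)
  note images = Ngen_generator_images[where g = "bt 0 2 0 2"]
  note cancel = Ngen_cancel_scalar[where g = "bt 0 2 0 2"]
  have b2b2: "C_b2b2 \<in> Ngen (bt 0 2 0 2)" unfolding C_b2b2_def by (rule Ngen.gen)
  have b1b2: "C_b1b2 \<in> Ngen (bt 0 2 0 2)" using images(2)[OF b2b2] unfolding DE1_on_C .
  have b0b2: "C_b0b2 \<in> Ngen (bt 0 2 0 2)"
    by (rule cancel[OF images(2)[OF b1b2, unfolded DE1_on_C]]) (simp add: qint_nonzero)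
  have b0b1: "C_b0b1 \<in> Ngen (bt 0 2 0 2)"
    by (rule cancel[OF images(2)[OF b0b2, unfolded DE1_on_C]]) (simp add: qint_nonzero)
  have "C_b0b0 \<in> Ngen (bt 0 2 0 2)"
    by (rule cancel[OF images(2)[OF b0b1, unfolded DE1_on_C]]) (simp add: qint_nonzero)
  then show "Ngen (bt 0 0 0 0) \<subseteq> Ngen (bt 0 2 0 2)"
    unfolding C_b0b0_def by (rule Ngen_least)
qed

lemma z_monomial_bt:
  "z_monomial (n, 0, 0) (bt a j b k) = bt (a + int n) j (b + int n) k"
  "z_monomial (0, n, 0) (bt a j b k) = bt (a - int n) j (b - int n) k"
proof -
  have "ZZ (bt a j b k) = bt (a + 1) j (b + 1) k" "ZZi (bt a j b k) = bt (a - 1) j (b - 1) k" for a b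
    by (auto simp: z_ops_apply bt_def fun_eq_iff)
  then show "z_monomial (n, 0, 0) (bt a j b k) = bt (a + int n) j (b + int n) k"
    "z_monomial (0, n, 0) (bt a j b k) = bt (a - int n) j (b - int n) k"
    unfolding z_monomial_def by (induction n arbitrary: a b) (simp_all add: algebra_simps)
qed

lemma diagonal_in_N:
  assumes "j \<in> {0, 2}"
  shows "bt a j a j \<in> N"
proof -
  have origin: "bt 0 j 0 j \<in> Ngen (bt 0 0 0 0)"
    using assms C_list_subset_N by (auto simp: C_list_eq C_b0b0_def C_b2b2_def N_def)
  show ?thesis
  proof (cases "a \<ge> 0")
    case True
    then have "bt a j a j = z_monomial (nat a, 0, 0) (bt 0 j 0 j)"
      by (simp add: z_monomial_bt)
    then show ?thesis unfolding N_def using Ngen_z_monomial[OF origin] by simp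
  next
    case False
    then have "bt a j a j = z_monomial (0, nat (- a), 0) (bt 0 j 0 j)"
      by (simp add: z_monomial_bt)
    then show ?thesis unfolding N_def using Ngen_z_monomial[OF origin] by simp
  qed
qed

theorem mainTheorem2:
  shows "lin_indep C_list
    \<and> N = poly_span C_list
    \<and> Ngen (bt 0 2 0 2) = Ngen (bt 0 0 0 0)
    \<and> (\<forall>a::int. \<forall>j::int. j \<in> {0, 2} \<longrightarrow> bt a j a j \<in> N)"
  using lin_indep_C_list N_eq_span poly_span_eq_span Ngen_b2b2_eq_Ngen_b0b0 diagonal_in_N by auto

end
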